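(* Let $f(m_\ell, m_s)$ be any function with $f(m_\ell,m_s) = o(m_\ell + m_s)$. Then for all sufficiently large $m_\ell m_s$, on the $m_\ell \times m_s$ grid $G$ (with $m_\ell \ge m_s \ge 2$), the fraction of instances $(G, X_I, X_G)$ (over all pairs of configurations with all vertices occupied) whose minimum makespan is at most $f(m_\ell, m_s)$ is at most $(1/2)^{m_\ell/4}$.
   Context: The $m_\ell \times m_s$ grid graph has vertex set $\{1,\dots,m_\ell\}\times\{1,\dots,m_s\}$ with edges between vertices at $\ell_1$-distance 1. A configuration is a bijection from robot labels $\{1,\dots,m_\ell m_s\}$ to the vertex set. A move sequence proceeds in synchronous steps: each robot stays put or moves to an adjacent vertex, with no two robots at the same vertex afterwards and no two robots traversing the same edge in opposite directions. The minimum makespan of $(G,X_I,X_G)$ is the least number of steps of such a sequence taking $X_I$ to $X_G$. *)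

theory Defs
  imports Complex_Main "HOL-Library.FuncSet"
begin

definition grid_vertices :: "nat \<Rightarrow> nat \<Rightarrow> (nat \<times> nat) set" where
  "grid_vertices ml ms = {1..ml} \<times> {1..ms}"

definition grid_adj :: "nat \<times> nat \<Rightarrow> nat \<times> nat \<Rightarrow> bool" where
  "grid_adj u v \<longleftrightarrow>
     \<bar>int (fst u) - int (fst v)\<bar> + \<bar>int (snd u) - int (snd v)\<bar> = 1"

text \<open>Configurations: bijections from robot labels 1..ml*ms onto the vertex set
  (extensional outside the label set, so that the set of configurations is finite).\<close>
definition configs :: "nat \<Rightarrow> nat \<Rightarrow> (nat \<Rightarrow> nat \<times> nat) set" where
  "configs ml ms = {X. X \<in> extensional {1..ml*ms} \<and> bij_betw X {1..ml*ms} (grid_vertices ml ms)}"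

text \<open>One synchronous step: every robot stays or moves to an adjacent vertex,
  no two robots end at the same vertex, and no two robots swap along an edge.\<close>
definition valid_step :: "nat \<Rightarrow> nat \<Rightarrow> (nat \<Rightarrow> nat \<times> nat) \<Rightarrow> (nat \<Rightarrow> nat \<times> nat) \<Rightarrow> bool" where
  "valid_step ml ms X Y \<longleftrightarrow>
     X \<in> configs ml ms \<and> Y \<in> configs ml ms \<and>
     (\<forall>r\<in>{1..ml*ms}. Y r = X r \<or> grid_adj (X r) (Y r)) \<and>
     inj_on Y {1..ml*ms} \<and>
     (\<forall>r\<in>{1..ml*ms}. \<forall>r'\<in>{1..ml*ms}. r \<noteq> r' \<and> Y r = X r' \<longrightarrow> Y r' \<noteq> X r)"

definition makespan_at_most :: "nat \<Rightarrow> nat \<Rightarrow> (nat \<Rightarrow> nat \<times> nat) \<Rightarrow> (nat \<Rightarrow> nat \<times> nat) \<Rightarrow> real \<Rightarrow> bool" where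
  "makespan_at_most ml ms XI XG t \<longleftrightarrow> (\<exists>k::nat. real k \<le> t \<and> (valid_step ml ms ^^ k) XI XG)"

end

theory Submission
  imports Defs "HOL-Combinatorics.Permutations"
begin

text \<open>In \<open>T\<close> steps every robot moves at most \<open>l\<^sub>1\<close>-distance \<open>T\<close>, so once \<open>X\<^sub>I\<close> is fixed,
  each robot has at most \<open>(2T+1) m\<^sub>s\<close> possible final positions (a band of \<open>2T+1\<close> rows)
  and at most \<open>((2T+1) m\<^sub>s)\<^sup>n\<close> goal configurations are reachable, where \<open>n = m\<^sub>\<ell> m\<^sub>s\<close>.
  There are \<open>n! \<ge> (n/3)\<^sup>n\<close> goal configurations in total, so the fraction of reachable pairs is
  at most \<open>(3(2T+1)m\<^sub>s/n)\<^sup>n = (3(2T+1)/m\<^sub>\<ell>)\<^sup>n\<close>, which is at most \<open>2\<^sup>-\<^sup>n\<close> once \<open>T = o(m\<^sub>\<ell>)\<close>.\<close>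

lemma power_div_fact_le_exp:
  fixes x :: real
  assumes "x \<ge> 0"
  shows "x ^ n / fact n \<le> exp x"
proof -
  have "x ^ n / fact n = (\<Sum>k\<in>{n}. x ^ k / fact k)" by simp
  also have "\<dots> \<le> (\<Sum>k. x ^ k / fact k)"
    by (rule sum_le_suminf) (use summable_exp[of x] assms in \<open>auto simp: divide_inverse ac_simps\<close>)
  also have "\<dots> = exp x" by (simp add: exp_def divide_inverse ac_simps)
  finally show ?thesis .
qed

lemma power_div_3_le_fact: "(real n / 3) ^ n \<le> fact n"
proof -
  have "real n ^ n / fact n \<le> exp (real n)" by (rule power_div_fact_le_exp) simp
  also have "exp (real n) = exp 1 ^ n" using exp_of_nat_mult[of n 1] by simp
  also have "\<dots> \<le> 3 ^ n" using exp_le by (intro power_mono) auto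
  finally have "real n ^ n \<le> 3 ^ n * fact n" by (simp add: divide_le_eq)
  then show ?thesis by (simp add: power_divide divide_le_eq mult.commute)
qed

lemma power_div_fact_le_half_power:
  assumes "6 * a \<le> n"
  shows "real a ^ n / fact n \<le> (1/2) ^ n"
proof -
  have "(2 * real a) ^ n \<le> (real n / 3) ^ n" using assms by (intro power_mono) auto
  also have "\<dots> \<le> fact n" by (rule power_div_3_le_fact)
  finally show ?thesis by (simp add: divide_le_eq power_divide power_mult_distrib field_simps)
qed

definition grid_dist :: "nat \<times> nat \<Rightarrow> nat \<times> nat \<Rightarrow> int" where
  "grid_dist u v = \<bar>int (fst u) - int (fst v)\<bar> + \<bar>int (snd u) - int (snd v)\<bar>"

lemma grid_dist_triangle: "grid_dist u w \<le> grid_dist u v + grid_dist v w"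
  unfolding grid_dist_def by arith

lemma grid_dist_le_1_if_stay_or_adj: "v = u \<or> grid_adj u v \<Longrightarrow> grid_dist u v \<le> 1"
  by (auto simp: grid_dist_def grid_adj_def)

lemma valid_steps_configs_dist:
  assumes "(valid_step ml ms ^^ k) X Y" and "X \<in> configs ml ms"
  shows "Y \<in> configs ml ms \<and> (\<forall>r\<in>{1..ml*ms}. grid_dist (X r) (Y r) \<le> int k)"
  using assms(1)
proof (induction k arbitrary: Y)
  case 0
  then show ?case using assms(2) by (simp add: grid_dist_def)
next
  case (Suc k)
  from Suc.prems obtain Z where Z: "(valid_step ml ms ^^ k) X Z" and step: "valid_step ml ms Z Y"
    by (rule relpowp_Suc_E)
  have "grid_dist (X r) (Y r) \<le> int (Suc k)" if r: "r \<in> {1..ml*ms}" for r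
  proof -
    have "grid_dist (X r) (Z r) \<le> int k" using Suc.IH[OF Z] r by blast
    moreover have "grid_dist (Z r) (Y r) \<le> 1"
      using step r by (intro grid_dist_le_1_if_stay_or_adj) (auto simp: valid_step_def)
    ultimately show ?thesis using grid_dist_triangle[of "X r" "Y r" "Z r"] by linarith
  qed
  moreover have "Y \<in> configs ml ms" using step by (simp add: valid_step_def)
  ultimately show ?case by blast
qed

lemma extensional_bij_betw_subset_PiE: "{X \<in> extensional A. bij_betw X A B} \<subseteq> PiE A (\<lambda>_. B)"
  by (auto simp: PiE_iff extensional_def intro: bij_betw_apply)

lemma configs_subset_PiE: "configs ml ms \<subseteq> PiE {1..ml*ms} (\<lambda>_. grid_vertices ml ms)"
  unfolding configs_def by (rule extensional_bij_betw_subset_PiE)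

lemma finite_configs: "finite (configs ml ms)"
  by (rule finite_subset[OF configs_subset_PiE]) (auto simp: grid_vertices_def intro!: finite_PiE)

lemma fact_le_card_extensional_bij_betw:
  assumes "finite A" "finite B" "card A = card B"
  shows "fact (card A) \<le> card {X \<in> extensional A. bij_betw X A B}"
proof -
  obtain g where g: "bij_betw g A B" using finite_same_card_bij[OF assms] by blast
  let ?h = "\<lambda>p. restrict (g \<circ> p) A"
  have "inj_on ?h {p. p permutes A}"
  proof (rule inj_onI)
    fix p q assume p: "p \<in> {p. p permutes A}" and q: "q \<in> {p. p permutes A}"
      and eq: "?h p = ?h q"
    have "p x = q x" for x
    proof (cases "x \<in> A")
      case True
      then have "g (p x) = g (q x)" using fun_cong[OF eq, of x] by simp
      moreover have "p x \<in> A" "q x \<in> A" using p q True by (auto simp: permutes_in_image)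
      ultimately show ?thesis using g by (meson bij_betw_def inj_onD)
    next
      case False
      then show ?thesis using p q by (metis mem_Collect_eq permutes_not_in)
    qed
    then show "p = q" by blast
  qed
  moreover have "?h ` {p. p permutes A} \<subseteq> {X \<in> extensional A. bij_betw X A B}"
  proof (intro image_subsetI CollectI conjI)
    fix p assume "p \<in> {p. p permutes A}"
    then have "bij_betw (g \<circ> p) A B" using g by (blast intro: bij_betw_trans permutes_imp_bij)
    moreover have "bij_betw (?h p) A B \<longleftrightarrow> bij_betw (g \<circ> p) A B" by (rule bij_betw_cong) simp
    ultimately show "bij_betw (?h p) A B" by blast
  qed simp
  moreover have "finite {X \<in> extensional A. bij_betw X A B}"
    using extensional_bij_betw_subset_PiE by (rule finite_subset) (simp add: assms finite_PiE)
  ultimately have "card {p. p permutes A} \<le> card {X \<in> extensional A. bij_betw X A B}"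
    by (rule card_inj_on_le)
  then show ?thesis using card_permutations[OF refl assms(1)] by simp
qed

lemma fact_le_card_configs: "fact (ml*ms) \<le> card (configs ml ms)"
  using fact_le_card_extensional_bij_betw[of "{1..ml*ms}" "grid_vertices ml ms"]
  by (simp add: configs_def grid_vertices_def card_cartesian_product)

text \<open>Contains every configuration reachable from \<open>X\<close> in \<open>T\<close> steps. When \<open>T > fst (X r)\<close>
  the truncated subtraction starts the band at row 0, which only enlarges it.\<close>
definition band_maps :: "nat \<Rightarrow> nat \<Rightarrow> nat \<Rightarrow> (nat \<Rightarrow> nat \<times> nat) \<Rightarrow> (nat \<Rightarrow> nat \<times> nat) set" where
  "band_maps ml ms T X = PiE {1..ml*ms} (\<lambda>r. {fst (X r) - T..fst (X r) + T} \<times> {1..ms})"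

lemma finite_band_maps: "finite (band_maps ml ms T X)"
  by (auto simp: band_maps_def intro!: finite_PiE)

lemma card_band_maps_le: "card (band_maps ml ms T X) \<le> ((2*T + 1) * ms) ^ (ml*ms)"
proof -
  have "card ({a - T..a + T} \<times> {1..ms}) \<le> (2*T + 1) * ms" for a
  proof -
    have "Suc (a + T) - (a - T) \<le> 2*T + 1" by arith
    then have "(Suc (a + T) - (a - T)) * ms \<le> (2*T + 1) * ms" by (rule mult_right_mono) simp
    then show ?thesis by (simp add: card_cartesian_product)
  qed
  then have "(\<Prod>r\<in>{1..ml*ms}. card ({fst (X r) - T..fst (X r) + T} \<times> {1..ms}))
      \<le> (\<Prod>r\<in>{1..ml*ms}. (2*T + 1) * ms)"
    by (intro prod_mono) simp
  then show ?thesis by (simp add: band_maps_def card_PiE)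
qed

lemma band_maps_if_grid_dist_le:
  assumes "Y \<in> PiE {1..ml*ms} (\<lambda>_. grid_vertices ml ms)"
    and "\<forall>r\<in>{1..ml*ms}. grid_dist (X r) (Y r) \<le> int T"
  shows "Y \<in> band_maps ml ms T X"
  using assms by (fastforce simp: band_maps_def PiE_iff grid_vertices_def grid_dist_def mem_Times_iff)

lemma makespan_at_most_imp_band_maps:
  assumes "XI \<in> configs ml ms" and "makespan_at_most ml ms XI XG t"
  shows "XG \<in> configs ml ms \<inter> band_maps ml ms (nat \<lfloor>t\<rfloor>) XI"
proof -
  obtain k where k: "real k \<le> t" and steps: "(valid_step ml ms ^^ k) XI XG"
    using assms(2) by (auto simp: makespan_at_most_def)
  have "int k \<le> int (nat \<lfloor>t\<rfloor>)" using k by linarith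
  then have XG: "XG \<in> configs ml ms"
    "\<forall>r\<in>{1..ml*ms}. grid_dist (XI r) (XG r) \<le> int (nat \<lfloor>t\<rfloor>)"
    using valid_steps_configs_dist[OF steps assms(1)] by auto
  have "XG \<in> PiE {1..ml*ms} (\<lambda>_. grid_vertices ml ms)" using XG(1) configs_subset_PiE by blast
  with XG show ?thesis by (simp add: band_maps_if_grid_dist_le)
qed

lemma card_short_makespan_pairs_le:
  "card {(XI, XG). XI \<in> configs ml ms \<and> XG \<in> configs ml ms \<and> makespan_at_most ml ms XI XG t}
     \<le> card (configs ml ms) * ((2 * nat \<lfloor>t\<rfloor> + 1) * ms) ^ (ml*ms)"
proof -
  let ?B = "band_maps ml ms (nat \<lfloor>t\<rfloor>)"
  have "card {(XI, XG). XI \<in> configs ml ms \<and> XG \<in> configs ml ms \<and> makespan_at_most ml ms XI XG t}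
        \<le> card (Sigma (configs ml ms) ?B)"
    using makespan_at_most_imp_band_maps
    by (intro card_mono) (auto simp: finite_configs finite_band_maps)
  also have "\<dots> = (\<Sum>X\<in>configs ml ms. card (?B X))"
    by (simp add: card_SigmaI finite_configs finite_band_maps)
  also have "\<dots> \<le> (\<Sum>X\<in>configs ml ms. ((2 * nat \<lfloor>t\<rfloor> + 1) * ms) ^ (ml*ms))"
    by (rule sum_mono) (rule card_band_maps_le)
  also have "\<dots> = card (configs ml ms) * ((2 * nat \<lfloor>t\<rfloor> + 1) * ms) ^ (ml*ms)" by simp
  finally show ?thesis .
qed

lemma short_makespan_fraction_le:
  "real (card {(XI, XG). XI \<in> configs ml ms \<and> XG \<in> configs ml ms \<and> makespan_at_most ml ms XI XG t})
     / real (card (configs ml ms \<times> configs ml ms))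
   \<le> real ((2 * nat \<lfloor>t\<rfloor> + 1) * ms) ^ (ml*ms) / fact (ml*ms)"
proof -
  let ?C = "real (card (configs ml ms))" and ?M = "real ((2 * nat \<lfloor>t\<rfloor> + 1) * ms) ^ (ml*ms)"
  have fact_le_C: "fact (ml*ms) \<le> ?C"
    using fact_le_card_configs by (metis of_nat_fact of_nat_le_iff)
  then have C_pos: "0 < ?C" by (meson fact_gt_zero less_le_trans)
  have "real (card {(XI, XG). XI \<in> configs ml ms \<and> XG \<in> configs ml ms \<and> makespan_at_most ml ms XI XG t})
        \<le> ?C * ?M"
    unfolding of_nat_power[symmetric] of_nat_mult[symmetric] of_nat_le_iff
    by (rule card_short_makespan_pairs_le)
  then have "real (card {(XI, XG). XI \<in> configs ml ms \<and> XG \<in> configs ml ms \<and> makespan_at_most ml ms XI XG t})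
        / real (card (configs ml ms \<times> configs ml ms)) \<le> ?C * ?M / (?C * ?C)"
    unfolding card_cartesian_product of_nat_mult[of "card (configs ml ms)"]
    by (rule divide_right_mono) simp
  also have "\<dots> = ?M / ?C" using C_pos by simp
  also have "\<dots> \<le> ?M / fact (ml*ms)" using fact_le_C C_pos by (intro divide_left_mono) simp_all
  finally show ?thesis .
qed

theorem lemma5:
  fixes f :: "nat \<Rightarrow> nat \<Rightarrow> real"
  assumes f_small_o: "\<forall>\<epsilon>>0. \<exists>K. \<forall>ml ms. ml \<ge> ms \<and> ms \<ge> 2 \<and> ml + ms \<ge> K \<longrightarrow>
                     \<bar>f ml ms\<bar> \<le> \<epsilon> * real (ml + ms)"
  shows "\<exists>N. \<forall>ml ms. ml \<ge> ms \<and> ms \<ge> 2 \<and> ml * ms \<ge> N \<longrightarrow>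
           real (card {(XI, XG). XI \<in> configs ml ms \<and> XG \<in> configs ml ms \<and>
                                 makespan_at_most ml ms XI XG (f ml ms)})
           / real (card (configs ml ms \<times> configs ml ms))
           \<le> (1/2) powr (real ml / 4)"
proof -
  obtain K where K: "\<forall>ml ms. ml \<ge> ms \<and> ms \<ge> 2 \<and> ml + ms \<ge> K \<longrightarrow>
                     \<bar>f ml ms\<bar> \<le> 1/48 * real (ml + ms)"
    using f_small_o by (meson divide_pos_pos zero_less_numeral zero_less_one)
  show ?thesis
  proof (intro exI allI impI)
    fix ml ms :: nat
    assume A: "ms \<le> ml \<and> 2 \<le> ms \<and> (K + 12)\<^sup>2 \<le> ml * ms"
    then have "(K + 12)\<^sup>2 \<le> ml\<^sup>2" by (metis le_trans mult_le_mono2 power2_eq_square)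
    then have ml_large: "K + 12 \<le> ml" by (rule power2_le_imp_le) simp
    let ?T = "nat \<lfloor>f ml ms\<rfloor>"
    \<comment> \<open>\<open>\<epsilon> = 1/48\<close> gives \<open>12T + 6 \<le> m\<^sub>\<ell>/2 + 6 \<le> m\<^sub>\<ell>\<close>, as \<open>m\<^sub>\<ell> \<ge> 12\<close>.\<close>
    have "real ?T \<le> \<bar>f ml ms\<bar>" by (cases "f ml ms < 0") auto
    also have "\<dots> \<le> 1/48 * real (ml + ms)" using K A ml_large by simp
    finally have "6 * (2 * ?T + 1) \<le> ml" using A ml_large by simp
    then have "6 * ((2 * ?T + 1) * ms) \<le> ml * ms" by (metis mult.assoc mult_le_mono1)
    then have "real ((2 * ?T + 1) * ms) ^ (ml*ms) / fact (ml*ms) \<le> (1/2) ^ (ml*ms)"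
      by (rule power_div_fact_le_half_power)
    also have "\<dots> = (1/2) powr real (ml*ms)" by (rule powr_realpow[symmetric]) simp
    also have "\<dots> \<le> (1/2) powr (real ml / 4)" using A by (intro powr_mono') auto
    finally show "real (card {(XI, XG). XI \<in> configs ml ms \<and> XG \<in> configs ml ms \<and>
                                 makespan_at_most ml ms XI XG (f ml ms)})
           / real (card (configs ml ms \<times> configs ml ms)) \<le> (1/2) powr (real ml / 4)"
      using short_makespan_fraction_le order_trans by blast
  qed
qed

end
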